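(* For every integer $n\ge 1$, $\chi_\rho(X_n)=3$ and $\chi_\rho(Y_n)=3$.
   Context: All graphs are finite and simple; $d(u,v)$ is the shortest-path distance. A $k$-packing coloring of $G$ is a map $c:V(G)\to\{1,\dots,k\}$ such that whenever $u\neq v$ and $c(u)=c(v)=i$, we have $d(u,v)>i$. $\chi_\rho(G)$ is the least $k$ such that $G$ has a $k$-packing coloring. $P_n$ is the path on $n$ vertices. $X_n$ is obtained from the disjoint union of $K_3$ and $P_n$ by adding an edge joining a vertex of $K_3$ to an end vertex of $P_n$ (the unique vertex if $n=1$). $Y_n$ is obtained from the disjoint union of $C_4$ and $P_n$ by adding an edge joining a vertex of $C_4$ to an end vertex of $P_n$ (the unique vertex if $n=1$). *)

theory Defs
  imports Main
begin

text \<open>A finite simple graph is given by a vertex set V and a symmetric,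
irreflexive edge predicate E.\<close>

definition is_walk :: "('a \<Rightarrow> 'a \<Rightarrow> bool) \<Rightarrow> 'a set \<Rightarrow> 'a list \<Rightarrow> bool" where
  "is_walk E V xs \<longleftrightarrow> xs \<noteq> [] \<and> set xs \<subseteq> V \<and>
     (\<forall>i. Suc i < length xs \<longrightarrow> E (xs ! i) (xs ! Suc i))"

definition gdist :: "'a set \<Rightarrow> ('a \<Rightarrow> 'a \<Rightarrow> bool) \<Rightarrow> 'a \<Rightarrow> 'a \<Rightarrow> nat" where
  "gdist V E u v = (LEAST k. \<exists>xs. is_walk E V xs \<and> hd xs = u \<and> last xs = v \<and> length xs = Suc k)"

definition packing_coloring ::
  "'a set \<Rightarrow> ('a \<Rightarrow> 'a \<Rightarrow> bool) \<Rightarrow> nat \<Rightarrow> ('a \<Rightarrow> nat) \<Rightarrow> bool" where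
  "packing_coloring V E k c \<longleftrightarrow>
     (\<forall>v\<in>V. c v \<in> {1..k}) \<and>
     (\<forall>u\<in>V. \<forall>v\<in>V. u \<noteq> v \<and> c u = c v \<longrightarrow> gdist V E u v > c u)"

definition packing_chromatic :: "'a set \<Rightarrow> ('a \<Rightarrow> 'a \<Rightarrow> bool) \<Rightarrow> nat" where
  "packing_chromatic V E = (LEAST k. \<exists>c. packing_coloring V E k c)"

text \<open>X_n: triangle on 0,1,2; path 3,4,...,n+2; edge {0,3}.\<close>
definition X_verts :: "nat \<Rightarrow> nat set" where
  "X_verts n = {0..<n+3}"

definition X_edge0 :: "nat \<Rightarrow> nat \<Rightarrow> nat \<Rightarrow> bool" where
  "X_edge0 n a b \<longleftrightarrow> (a = 0 \<and> b = 1) \<or> (a = 1 \<and> b = 2) \<or> (a = 0 \<and> b = 2)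
      \<or> (a = 0 \<and> b = 3) \<or> (3 \<le> a \<and> b = a + 1 \<and> b < n + 3)"

definition X_edge :: "nat \<Rightarrow> nat \<Rightarrow> nat \<Rightarrow> bool" where
  "X_edge n a b \<longleftrightarrow> X_edge0 n a b \<or> X_edge0 n b a"

text \<open>Y_n: 4-cycle 0-1-2-3-0; path 4,5,...,n+3; edge {0,4}.\<close>
definition Y_verts :: "nat \<Rightarrow> nat set" where
  "Y_verts n = {0..<n+4}"

definition Y_edge0 :: "nat \<Rightarrow> nat \<Rightarrow> nat \<Rightarrow> bool" where
  "Y_edge0 n a b \<longleftrightarrow> (a = 0 \<and> b = 1) \<or> (a = 1 \<and> b = 2) \<or> (a = 2 \<and> b = 3)
      \<or> (a = 0 \<and> b = 3) \<or> (a = 0 \<and> b = 4) \<or> (4 \<le> a \<and> b = a + 1 \<and> b < n + 4)"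

definition Y_edge :: "nat \<Rightarrow> nat \<Rightarrow> nat \<Rightarrow> bool" where
  "Y_edge n a b \<longleftrightarrow> Y_edge0 n a b \<or> Y_edge0 n b a"

end

theory Submission
  imports Defs
begin

(*
  An integer potential that changes by at most 1 along every edge bounds the graph distance from
  below, so a coloring is a packing coloring as soon as any two distinct vertices of the same color i
  are more than i apart under some such potential. Both X_n and Y_n map 1-Lipschitz onto the integer
  line, vertex 0 to 3 and the path to 4, 5, ...; pulling back the periodic coloring 1, 2, 1, 3 of the
  line gives a 3-packing coloring, after recoloring one triangle vertex of X_n (it shares its position
  with the other) and separating the two opposite color-1 vertices of the 4-cycle of Y_n by a second
  potential. Three colors are necessary: a triangle needs three, and a 2-coloring of a 4-cycle gives
  both colors to a pair of opposite vertices at distance 2, so both colors would have to be 1.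
*)

lemma is_walk_Cons:
  "xs \<noteq> [] \<Longrightarrow> is_walk E V (a # xs) \<longleftrightarrow> a \<in> V \<and> E a (hd xs) \<and> is_walk E V xs"
  by (cases xs) (auto simp: is_walk_def nth_Cons hd_conv_nth split: nat.split)

lemma is_walk_singleton [simp]: "is_walk E V [a] \<longleftrightarrow> a \<in> V"
  by (simp add: is_walk_def)

lemma gdist_le_walk:
  assumes "is_walk E V xs"
  shows "gdist V E (hd xs) (last xs) \<le> length xs - 1"
  unfolding gdist_def
proof (rule Least_le)
  have "xs \<noteq> []" using assms by (simp add: is_walk_def)
  then show "\<exists>ys. is_walk E V ys \<and> hd ys = hd xs \<and> last ys = last xs \<and> length ys = Suc (length xs - 1)"
    using assms by auto
qed

definition edge_in :: "'a set \<Rightarrow> ('a \<Rightarrow> 'a \<Rightarrow> bool) \<Rightarrow> 'a \<Rightarrow> 'a \<Rightarrow> bool" where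
  "edge_in V E a b \<longleftrightarrow> a \<in> V \<and> b \<in> V \<and> E a b"

definition graph_connected :: "'a set \<Rightarrow> ('a \<Rightarrow> 'a \<Rightarrow> bool) \<Rightarrow> bool" where
  "graph_connected V E \<longleftrightarrow> (\<forall>u\<in>V. \<forall>v\<in>V. (edge_in V E)\<^sup>*\<^sup>* u v)"

lemma rtranclp_edge_in_walk:
  assumes "(edge_in V E)\<^sup>*\<^sup>* u v" and "v \<in> V"
  shows "\<exists>xs. is_walk E V xs \<and> hd xs = u \<and> last xs = v"
  using assms(1)
proof (induction rule: converse_rtranclp_induct)
  case base
  show ?case using assms(2) by (intro exI[of _ "[v]"]) (simp add: is_walk_def)
next
  case (step a b)
  then obtain xs where "is_walk E V xs" "hd xs = b" "last xs = v" by blast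
  moreover from this have "xs \<noteq> []" by (simp add: is_walk_def)
  ultimately show ?case using step.hyps(1)
    by (intro exI[of _ "a # xs"]) (simp add: is_walk_Cons edge_in_def)
qed

lemma graph_connected_parentI:
  assumes "symp E" and "r \<in> V"
    and parent: "\<And>v. v \<in> V \<Longrightarrow> v \<noteq> r \<Longrightarrow> p v \<in> V \<and> E v (p v) \<and> h (p v) < (h v :: nat)"
  shows "graph_connected V E"
proof -
  have to_root: "(edge_in V E)\<^sup>*\<^sup>* v r" if "v \<in> V" for v
    using that
  proof (induction "h v" arbitrary: v rule: less_induct)
    case less
    show ?case
    proof (cases "v = r")
      case False
      with parent less.prems have "edge_in V E v (p v)" "(edge_in V E)\<^sup>*\<^sup>* (p v) r"
        by (auto simp: edge_in_def intro: less.hyps)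
      then show ?thesis by (rule converse_rtranclp_into_rtranclp)
    qed simp
  qed
  have "symp (edge_in V E)"
    using \<open>symp E\<close> by (auto simp: symp_def edge_in_def)
  then have "(edge_in V E)\<^sup>*\<^sup>* r v" if "v \<in> V" for v
    using to_root[OF that] by (blast dest: sympD[OF symp_rtranclp])
  with to_root show ?thesis
    unfolding graph_connected_def by (blast intro: rtranclp_trans)
qed

definition edge_lipschitz :: "'a set \<Rightarrow> ('a \<Rightarrow> 'a \<Rightarrow> bool) \<Rightarrow> ('a \<Rightarrow> int) \<Rightarrow> bool" where
  "edge_lipschitz V E f \<longleftrightarrow> (\<forall>a\<in>V. \<forall>b\<in>V. E a b \<longrightarrow> \<bar>f a - f b\<bar> \<le> 1)"

lemma edge_lipschitz_walk:
  assumes "edge_lipschitz V E f" and "is_walk E V xs"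
  shows "\<bar>f (hd xs) - f (last xs)\<bar> \<le> int (length xs) - 1"
  using assms(2)
proof (induction xs)
  case (Cons a xs)
  show ?case
  proof (cases "xs = []")
    case False
    with Cons.prems have "a \<in> V" "E a (hd xs)" "is_walk E V xs"
      by (simp_all add: is_walk_Cons)
    moreover from this False have "hd xs \<in> V" by (auto simp: is_walk_def)
    ultimately have "\<bar>f a - f (hd xs)\<bar> \<le> 1" "\<bar>f (hd xs) - f (last xs)\<bar> \<le> int (length xs) - 1"
      using assms(1) Cons.IH by (auto simp: edge_lipschitz_def)
    with False show ?thesis by simp
  qed simp
qed (simp add: is_walk_def)

(* Connectivity is needed: for unreachable pairs gdist is the LEAST element of an empty set. *)
lemma edge_lipschitz_le_gdist:
  assumes "graph_connected V E" "u \<in> V" "v \<in> V" "edge_lipschitz V E f"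
  shows "\<bar>f u - f v\<bar> \<le> int (gdist V E u v)"
proof -
  let ?P = "\<lambda>k. \<exists>xs. is_walk E V xs \<and> hd xs = u \<and> last xs = v \<and> length xs = Suc k"
  obtain xs where xs: "is_walk E V xs" "hd xs = u" "last xs = v"
    using assms(1-3) rtranclp_edge_in_walk unfolding graph_connected_def by meson
  then have "xs \<noteq> []" by (simp add: is_walk_def)
  with xs have "?P (length xs - 1)" by auto
  then have "?P (gdist V E u v)" unfolding gdist_def by (rule LeastI)
  then obtain ys where "is_walk E V ys" "hd ys = u" "last ys = v" "length ys = Suc (gdist V E u v)"
    by blast
  with edge_lipschitz_walk[OF assms(4)] show ?thesis by fastforce
qed

lemma edge_lipschitz_separating:
  assumes "\<not> E u v" and "\<not> E v u"
  shows "edge_lipschitz V E (\<lambda>x. if x = u then 0 else if x = v then 2 else 1)"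
  using assms by (auto simp: edge_lipschitz_def)

lemma packing_coloringI_lipschitz:
  assumes "graph_connected V E"
    and "\<And>v. v \<in> V \<Longrightarrow> c v \<in> {1..k}"
    and "\<And>u v. u \<in> V \<Longrightarrow> v \<in> V \<Longrightarrow> u \<noteq> v \<Longrightarrow> c u = c v \<Longrightarrow>
           \<exists>f. edge_lipschitz V E f \<and> int (c u) < \<bar>f u - f v\<bar>"
  shows "packing_coloring V E k c"
  unfolding packing_coloring_def
proof (intro conjI ballI impI)
  fix u v assume uv: "u \<in> V" "v \<in> V" "u \<noteq> v \<and> c u = c v"
  then obtain f where "edge_lipschitz V E f" "int (c u) < \<bar>f u - f v\<bar>"
    using assms(3) by blast
  with edge_lipschitz_le_gdist[OF assms(1) uv(1,2)] have "int (c u) < int (gdist V E u v)"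
    by (meson less_le_trans)
  then show "c u < gdist V E u v" by simp
qed (use assms(2) in blast)

lemma packing_coloring_adjacent:
  assumes "packing_coloring V E k c" "u \<in> V" "v \<in> V" "E u v" "u \<noteq> v"
  shows "c u \<noteq> c v"
proof
  assume "c u = c v"
  with assms have "c u < gdist V E u v" "1 \<le> c u" by (auto simp: packing_coloring_def)
  with gdist_le_walk[of E V "[u, v]"] assms(2-4) show False by (simp add: is_walk_Cons)
qed

lemma packing_coloring_common_neighbor:
  assumes "packing_coloring V E k c" "u \<in> V" "v \<in> V" "w \<in> V" "E u w" "E w v" "u \<noteq> v"
    and "c u = c v"
  shows "c u = 1"
proof -
  from assms have "c u < gdist V E u v" "1 \<le> c u" by (auto simp: packing_coloring_def)
  with gdist_le_walk[of E V "[u, w, v]"] assms(2-6) show ?thesis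
    by (simp add: is_walk_Cons)
qed

lemma packing_coloring_triangle:
  assumes "packing_coloring V E k c" "u \<in> V" "v \<in> V" "w \<in> V"
    and "E u v" "E v w" "E u w" "distinct [u, v, w]"
  shows "3 \<le> k"
proof -
  from assms have "c u \<noteq> c v" "c v \<noteq> c w" "c u \<noteq> c w"
    by (auto dest: packing_coloring_adjacent)
  moreover from assms(1-4) have "c u \<in> {1..k}" "c v \<in> {1..k}" "c w \<in> {1..k}"
    by (simp_all add: packing_coloring_def)
  ultimately show ?thesis by auto
qed

lemma packing_coloring_four_cycle:
  assumes "packing_coloring V E k c" "u \<in> V" "v \<in> V" "w \<in> V" "x \<in> V"
    and "E u v" "E v w" "E w x" "E x u" "distinct [u, v, w, x]"
  shows "3 \<le> k"
proof (rule ccontr)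
  assume "\<not> 3 \<le> k"
  with assms(1-5) have "c u \<in> {1, 2}" "c v \<in> {1, 2}" "c w \<in> {1, 2}" "c x \<in> {1, 2}"
    by (auto simp: packing_coloring_def)
  moreover from assms have "c u \<noteq> c v" "c v \<noteq> c w" "c w \<noteq> c x" "c x \<noteq> c u"
    by (auto dest: packing_coloring_adjacent)
  ultimately have "c u = c w" "c v = c x" "c u \<noteq> c v" by auto
  with assms have "c u = 1" "c v = 1"
    using packing_coloring_common_neighbor[of V E k c u w v]
      packing_coloring_common_neighbor[of V E k c v x w] by simp_all
  with \<open>c u \<noteq> c v\<close> show False by simp
qed

lemma packing_chromatic_eqI:
  assumes "packing_coloring V E k c"
    and "\<And>k' c'. packing_coloring V E k' c' \<Longrightarrow> k \<le> k'"
  shows "packing_chromatic V E = k"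
  unfolding packing_chromatic_def using assms by (blast intro: Least_equality)

definition path_color :: "int \<Rightarrow> nat" where
  "path_color z = (if even z then 1 else if z mod 4 = 1 then 2 else 3)"

lemma path_color_range: "path_color z \<in> {1..3}"
  by (simp add: path_color_def)

lemma path_color_packing:
  assumes "z \<noteq> w" and "path_color z = path_color w"
  shows "int (path_color z) < \<bar>z - w\<bar>"
proof -
  have "z - w \<noteq> 0" using assms(1) by simp
  have "even z \<and> even w \<or> z mod 4 = w mod 4"
    using assms(2) unfolding path_color_def by (auto split: if_splits) presburger+
  then consider "path_color z = 1" "2 dvd z - w" | "4 dvd z - w"
    unfolding path_color_def by (auto simp: mod_eq_dvd_iff[symmetric])
  then show ?thesis
    using dvd_imp_le_int[OF \<open>z - w \<noteq> 0\<close>, of 2] dvd_imp_le_int[OF \<open>z - w \<noteq> 0\<close>, of 4]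
      path_color_range[of z] by cases auto
qed

definition X_position :: "nat \<Rightarrow> int" where
  "X_position v = (if v = 0 then 3 else if v \<le> 2 then 2 else int v + 1)"

definition X_coloring :: "nat \<Rightarrow> nat" where
  "X_coloring v = (if v = 2 then 2 else path_color (X_position v))"

lemma X_connected: "graph_connected (X_verts n) (X_edge n)"
  by (rule graph_connected_parentI[where r = 0 and p = "\<lambda>v. if v \<le> 3 then 0 else v - 1" and h = id])
    (auto simp: symp_def X_edge_def X_edge0_def X_verts_def)

lemma X_position_lipschitz: "edge_lipschitz (X_verts n) (X_edge n) X_position"
  by (auto simp: edge_lipschitz_def X_edge_def X_edge0_def X_position_def)

lemma X_packing_coloring: "packing_coloring (X_verts n) (X_edge n) 3 X_coloring"
proof (rule packing_coloringI_lipschitz[OF X_connected])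
  show "X_coloring v \<in> {1..3}" for v
    using path_color_range by (simp add: X_coloring_def)
  fix u v assume "u \<noteq> v" "X_coloring u = X_coloring v"
  then have "int (X_coloring u) < \<bar>X_position u - X_position v\<bar>"
  proof (cases "u = 2 \<or> v = 2")
    case True
    have far: "5 \<le> X_position w" if "w \<noteq> 2" "X_coloring w = 2" for w
      using that by (auto simp: X_coloring_def X_position_def path_color_def split: if_splits)
    have "X_coloring 2 = 2" "X_position 2 = 2"
      by (simp_all add: X_coloring_def X_position_def)
    with True \<open>u \<noteq> v\<close> \<open>X_coloring u = X_coloring v\<close> show ?thesis
      using far[of u] far[of v] by auto
  next
    case False
    with \<open>u \<noteq> v\<close> have "X_position u \<noteq> X_position v"
      by (auto simp: X_position_def)
    with False \<open>X_coloring u = X_coloring v\<close> show ?thesis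
      using path_color_packing by (simp add: X_coloring_def)
  qed
  with X_position_lipschitz
  show "\<exists>f. edge_lipschitz (X_verts n) (X_edge n) f \<and> int (X_coloring u) < \<bar>f u - f v\<bar>"
    by blast
qed

definition Y_position :: "nat \<Rightarrow> int" where
  "Y_position v = (if v = 0 then 3 else if v = 2 then 1 else if v \<le> 3 then 2 else int v)"

definition Y_coloring :: "nat \<Rightarrow> nat" where
  "Y_coloring v = path_color (Y_position v)"

lemma Y_connected: "graph_connected (Y_verts n) (Y_edge n)"
  by (rule graph_connected_parentI[where r = 0 and h = id
        and p = "\<lambda>v. if v = 2 then 1 else if v \<le> 4 then 0 else v - 1"])
    (auto simp: symp_def Y_edge_def Y_edge0_def Y_verts_def)

lemma Y_position_lipschitz: "edge_lipschitz (Y_verts n) (Y_edge n) Y_position"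
  by (auto simp: edge_lipschitz_def Y_edge_def Y_edge0_def Y_position_def)

lemma Y_packing_coloring: "packing_coloring (Y_verts n) (Y_edge n) 3 Y_coloring"
proof (rule packing_coloringI_lipschitz[OF Y_connected])
  show "Y_coloring v \<in> {1..3}" for v
    using path_color_range by (simp add: Y_coloring_def)
  fix u v assume uv: "u \<noteq> v" "Y_coloring u = Y_coloring v"
  show "\<exists>f. edge_lipschitz (Y_verts n) (Y_edge n) f \<and> int (Y_coloring u) < \<bar>f u - f v\<bar>"
  proof (cases "{u, v} = {1, 3}")
    case True
    then have "\<not> Y_edge n u v" "\<not> Y_edge n v u" "Y_coloring u = 1"
      by (auto simp: doubleton_eq_iff Y_edge_def Y_edge0_def Y_coloring_def Y_position_def
          path_color_def)
    with edge_lipschitz_separating[of "Y_edge n" u v] uv(1) show ?thesis by fastforce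
  next
    case False
    with uv(1) have "Y_position u \<noteq> Y_position v"
      by (auto simp: Y_position_def split: if_splits)
    with uv(2) Y_position_lipschitz show ?thesis
      using path_color_packing by (auto simp: Y_coloring_def)
  qed
qed

theorem mainTheorem5:
  fixes n :: nat
  assumes "n \<ge> 1"
  shows "packing_chromatic (X_verts n) (X_edge n) = 3 \<and>
         packing_chromatic (Y_verts n) (Y_edge n) = 3"
proof
  show "packing_chromatic (X_verts n) (X_edge n) = 3"
  proof (rule packing_chromatic_eqI[OF X_packing_coloring])
    fix k c assume "packing_coloring (X_verts n) (X_edge n) k c"
    then show "3 \<le> k"
      by (rule packing_coloring_triangle[where u = 0 and v = 1 and w = 2])
        (auto simp: X_verts_def X_edge_def X_edge0_def)
  qed
  show "packing_chromatic (Y_verts n) (Y_edge n) = 3"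
  proof (rule packing_chromatic_eqI[OF Y_packing_coloring])
    fix k c assume "packing_coloring (Y_verts n) (Y_edge n) k c"
    then show "3 \<le> k"
      by (rule packing_coloring_four_cycle[where u = 0 and v = 1 and w = 2 and x = 3])
        (auto simp: Y_verts_def Y_edge_def Y_edge0_def)
  qed
qed

end
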